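(* Let $H$ be a real or complex Hilbert space of dimension $n$, let $N\ge \max(n,2)$, let $F=\{f_i\}_{i=1}^N$ be a frame for $H$, and let $\{q_i\}_{i=1}^N$ be a weight number sequence. Let $G=\{g_i\}_{i=1}^N$ be a dual of $F$ satisfying: (i) $\langle g_i,f_i\rangle\ge 0$ for all $1\le i\le N$; (ii) there is a constant $c>0$ with $q_iq_j\langle g_j,f_i\rangle\langle g_i,f_j\rangle=c$ for all $i\ne j$. Let $\zeta=\{i: q_i\langle g_i,f_i\rangle=\mathcal{R}_1^p(F,G)\}$. If $|\zeta|=1$, then $$\mathcal{R}_2^p(F,G)=\frac12\Big\{\mathcal{R}_1^p(F,G)+\max_{i\notin\zeta}q_i\langle g_i,f_i\rangle+\sqrt{\big(\mathcal{R}_1^p(F,G)-\max_{i\notin\zeta}q_i\langle g_i,f_i\rangle\big)^2+4c}\Big\}.$$ If $|\zeta|>1$, then $\mathcal{R}_2^p(F,G)=\mathcal{R}_1^p(F,G)+\sqrt{c}$.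
   Context: Inner products are linear in the first argument. A frame for $H$ is a finite sequence spanning $H$. Analysis operator: $\Theta_F f=(\langle f,f_i\rangle)_i$. Synthesis operator: $\Theta_G^*(c)=\sum_i c_ig_i$. A dual of $F$ is a frame $G$ with $f=\sum_i\langle f,f_i\rangle g_i=\sum_i\langle f,g_i\rangle f_i$ for all $f$. A probability sequence satisfies $0\le p_i\le 1$ and $\sum p_i=1$. Weight numbers: $q_i=\frac{\sum_j p_j}{\sum_j p_j-p_i}\cdot\frac{N-1}{n}$ (assumed well defined). For $m\in\{1,2\}$, $\mathcal{D}_m^p$ is the set of $N\times N$ diagonal matrices $D$ for which there is $\Lambda\subseteq\{1,\dots,N\}$ with $|\Lambda|=m$, $D_{ii}=q_i$ for $i\in\Lambda$ and $D_{ii}=0$ otherwise. $\mathcal{R}_m^p(F,G)=\max\{\rho(\Theta_G^*D\Theta_F):D\in\mathcal{D}_m^p\}$, with $\rho$ the spectral radius. *)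

theory Defs
  imports "Jordan_Normal_Form.Spectral_Radius"
begin

(* Vectors of the n-dimensional Hilbert space H = C^n are complex vecs of dimension n.
   Frames / sequences are indexed by i < N (i.e. i = 0..N-1). *)

definition cinner :: "complex vec \<Rightarrow> complex vec \<Rightarrow> complex" where
  "cinner x y = (\<Sum>r<dim_vec x. x $ r * cnj (y $ r))"

definition is_frame :: "nat \<Rightarrow> nat \<Rightarrow> (nat \<Rightarrow> complex vec) \<Rightarrow> bool" where
  "is_frame n N f \<longleftrightarrow> (\<forall>i<N. f i \<in> carrier_vec n) \<and>
     (\<forall>x\<in>carrier_vec n. \<exists>a::nat \<Rightarrow> complex. x = vec n (\<lambda>r. \<Sum>i<N. a i * f i $ r))"

definition is_dual :: "nat \<Rightarrow> nat \<Rightarrow> (nat \<Rightarrow> complex vec) \<Rightarrow> (nat \<Rightarrow> complex vec) \<Rightarrow> bool" where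
  "is_dual n N f g \<longleftrightarrow> is_frame n N g \<and>
     (\<forall>x\<in>carrier_vec n.
        x = vec n (\<lambda>r. \<Sum>i<N. cinner x (f i) * g i $ r) \<and>
        x = vec n (\<lambda>r. \<Sum>i<N. cinner x (g i) * f i $ r))"

definition analysis_op :: "nat \<Rightarrow> nat \<Rightarrow> (nat \<Rightarrow> complex vec) \<Rightarrow> complex mat" where
  "analysis_op n N f = mat N n (\<lambda>(i, r). cnj (f i $ r))"

definition synthesis_op :: "nat \<Rightarrow> nat \<Rightarrow> (nat \<Rightarrow> complex vec) \<Rightarrow> complex mat" where
  "synthesis_op n N g = mat n N (\<lambda>(r, i). g i $ r)"

definition prob_seq :: "nat \<Rightarrow> (nat \<Rightarrow> real) \<Rightarrow> bool" where
  "prob_seq N p \<longleftrightarrow> (\<forall>i<N. 0 \<le> p i \<and> p i \<le> 1) \<and> (\<Sum>i<N. p i) = 1"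

definition weight_numbers :: "nat \<Rightarrow> nat \<Rightarrow> (nat \<Rightarrow> real) \<Rightarrow> bool" where
  "weight_numbers n N q \<longleftrightarrow> n \<noteq> 0 \<and> (\<exists>p. prob_seq N p \<and>
     (\<forall>i<N. (\<Sum>j<N. p j) - p i \<noteq> 0 \<and>
        q i = (\<Sum>j<N. p j) / ((\<Sum>j<N. p j) - p i) * (real N - 1) / real n))"

definition Dset :: "nat \<Rightarrow> (nat \<Rightarrow> real) \<Rightarrow> nat \<Rightarrow> complex mat set" where
  "Dset N q m = {mat N N (\<lambda>(i, j). if i = j \<and> i \<in> \<Lambda> then complex_of_real (q i) else 0)
                 | \<Lambda>. \<Lambda> \<subseteq> {..<N} \<and> card \<Lambda> = m}"

definition Rmp :: "nat \<Rightarrow> nat \<Rightarrow> (nat \<Rightarrow> real) \<Rightarrow> nat \<Rightarrow> (nat \<Rightarrow> complex vec) \<Rightarrow> (nat \<Rightarrow> complex vec) \<Rightarrow> real" where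
  "Rmp n N q m f g = Max {spectral_radius (synthesis_op n N g * D * analysis_op n N f) | D. D \<in> Dset N q m}"

end

theory Submission
  imports Defs
begin

(* Write T_L = Theta_G^* D Theta_F for the diagonal D selecting the index set L.  It maps x to
   sum_{i in L} q_i <x, f_i> g_i, so its nonzero eigenvalues are those of the L x L matrix
   (q_k <g_j, f_k>).  For L = {i} the only one is a_i = q_i <g_i, f_i>.  For L = {i, j}
   hypothesis (ii) turns the characteristic equation into (x - a_i)(x - a_j) = c, whose larger
   root rho(a_i, a_j) dominates the other root in modulus because a_i + a_j >= 0.  As rho is
   symmetric and monotone, its maximum over pairs is taken at the largest a_k paired with the
   largest remaining a_i; if the largest value R is attained twice, this is rho(R, R) = R + sqrt c. *)

definition weight_diag :: "nat \<Rightarrow> (nat \<Rightarrow> real) \<Rightarrow> nat set \<Rightarrow> complex mat" where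
  "weight_diag N q L = mat N N (\<lambda>(i, j). if i = j \<and> i \<in> L then complex_of_real (q i) else 0)"

definition weighted_frame_op ::
    "nat \<Rightarrow> nat \<Rightarrow> (nat \<Rightarrow> complex vec) \<Rightarrow> (nat \<Rightarrow> complex vec) \<Rightarrow> (nat \<Rightarrow> real) \<Rightarrow> nat set \<Rightarrow> complex mat" where
  "weighted_frame_op n N f g q L = synthesis_op n N g * weight_diag N q L * analysis_op n N f"

lemma Rmp_eq_Max_weighted_frame_op:
  "Rmp n N q m f g =
     Max ((\<lambda>L. spectral_radius (weighted_frame_op n N f g q L)) ` {L. L \<subseteq> {..<N} \<and> card L = m})"
  unfolding Rmp_def Dset_def weighted_frame_op_def weight_diag_def
  by (rule arg_cong[where f = Max]) blast

lemma weighted_frame_op_carrier: "weighted_frame_op n N f g q L \<in> carrier_mat n n"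
  unfolding weighted_frame_op_def synthesis_op_def analysis_op_def weight_diag_def by auto

definition vec_lincomb :: "nat \<Rightarrow> (nat \<Rightarrow> complex vec) \<Rightarrow> nat set \<Rightarrow> (nat \<Rightarrow> complex) \<Rightarrow> complex vec" where
  "vec_lincomb n g L w = vec n (\<lambda>r. \<Sum>j\<in>L. w j * g j $ r)"

lemma vec_lincomb_carrier: "vec_lincomb n g L w \<in> carrier_vec n"
  unfolding vec_lincomb_def by simp

lemma smult_vec_lincomb: "l \<cdot>\<^sub>v vec_lincomb n g L w = vec_lincomb n g L (\<lambda>j. l * w j)"
  unfolding vec_lincomb_def by (intro eq_vecI) (simp_all add: sum_distrib_left mult.assoc)

lemma cinner_smult_left: "cinner (a \<cdot>\<^sub>v x) y = a * cinner x y"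
  by (simp add: cinner_def sum_distrib_left mult.assoc)

lemma cinner_vec_lincomb:
  assumes "finite L" and "\<forall>j\<in>L. g j \<in> carrier_vec n"
  shows "cinner (vec_lincomb n g L w) y = (\<Sum>j\<in>L. w j * cinner (g j) y)"
proof -
  have dim: "dim_vec (g j) = n" if "j \<in> L" for j
    using assms(2) that by auto
  have "cinner (vec_lincomb n g L w) y = (\<Sum>r<n. \<Sum>j\<in>L. w j * g j $ r * cnj (y $ r))"
    by (simp add: vec_lincomb_def cinner_def sum_distrib_right)
  also have "\<dots> = (\<Sum>j\<in>L. w j * cinner (g j) y)"
    by (subst sum.swap) (simp add: cinner_def sum_distrib_left mult.assoc dim)
  finally show ?thesis .
qed

lemma weighted_frame_op_mult_vec:
  assumes f: "\<forall>i<N. f i \<in> carrier_vec n" and L: "L \<subseteq> {..<N}"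
    and x: "x \<in> carrier_vec n"
  shows "weighted_frame_op n N f g q L *\<^sub>v x =
     vec_lincomb n g L (\<lambda>i. complex_of_real (q i) * cinner x (f i))"
proof -
  have "analysis_op n N f *\<^sub>v x = vec N (\<lambda>i. cinner x (f i))"
    using f x by (intro eq_vecI) (auto simp: analysis_op_def cinner_def scalar_prod_def mult.commute intro!: sum.cong)
  moreover have "weight_diag N q L *\<^sub>v vec N (\<lambda>i. cinner x (f i)) =
      vec N (\<lambda>i. if i \<in> L then complex_of_real (q i) * cinner x (f i) else 0)"
    by (auto simp: weight_diag_def scalar_prod_def if_distrib[of "\<lambda>z. z * _"] cong: if_cong)
  moreover have "synthesis_op n N g *\<^sub>v vec N (\<lambda>i. if i \<in> L then complex_of_real (q i) * cinner x (f i) else 0)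
      = vec_lincomb n g L (\<lambda>i. complex_of_real (q i) * cinner x (f i))"
    using L by (auto simp: vec_lincomb_def synthesis_op_def scalar_prod_def if_distrib[of "\<lambda>z. _ * z"]
        sum.If_cases lessThan_atLeast0[symmetric] Int_absorb1 mult.commute cong: if_cong)
  moreover have "weighted_frame_op n N f g q L *\<^sub>v x =
      synthesis_op n N g *\<^sub>v (weight_diag N q L *\<^sub>v (analysis_op n N f *\<^sub>v x))"
  proof -
    have S: "synthesis_op n N g \<in> carrier_mat n N" and D: "weight_diag N q L \<in> carrier_mat N N"
      and A: "analysis_op n N f \<in> carrier_mat N n"
      by (simp_all add: synthesis_op_def weight_diag_def analysis_op_def)
    show ?thesis
      unfolding weighted_frame_op_def
      using assoc_mult_mat_vec[OF mult_carrier_mat[OF S D] A x]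
        assoc_mult_mat_vec[OF S D mult_mat_vec_carrier[OF A x]] by simp
  qed
  ultimately show ?thesis by simp
qed

lemma weighted_frame_op_eigenvalueD:
  assumes f: "\<forall>i<N. f i \<in> carrier_vec n" and g: "\<forall>i<N. g i \<in> carrier_vec n"
    and L: "L \<subseteq> {..<N}" and l: "l \<noteq> 0"
    and ev: "eigenvalue (weighted_frame_op n N f g q L) l"
  shows "\<exists>w. (\<exists>k\<in>L. w k \<noteq> 0) \<and>
    (\<forall>k\<in>L. l * w k = (\<Sum>j\<in>L. complex_of_real (q k) * cinner (g j) (f k) * w j))"
proof -
  have "dim_row (weighted_frame_op n N f g q L) = n" using weighted_frame_op_carrier by blast
  then obtain v where v: "v \<in> carrier_vec n" "v \<noteq> 0\<^sub>v n" "weighted_frame_op n N f g q L *\<^sub>v v = l \<cdot>\<^sub>v v"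
    using ev unfolding eigenvalue_def eigenvector_def by auto
  have fin: "finite L" and gL: "\<forall>j\<in>L. g j \<in> carrier_vec n"
    using L g finite_subset by auto
  define w where "w k = complex_of_real (q k) * cinner v (f k)" for k
  have lv: "l \<cdot>\<^sub>v v = vec_lincomb n g L w"
    using v(3) weighted_frame_op_mult_vec[OF f L v(1)] unfolding w_def by simp
  have "\<exists>k\<in>L. w k \<noteq> 0"
  proof (rule ccontr)
    assume "\<not> (\<exists>k\<in>L. w k \<noteq> 0)"
    hence "(l \<cdot>\<^sub>v v) $ r = 0" if "r < n" for r
      unfolding lv vec_lincomb_def using that by simp
    hence "v = 0\<^sub>v n" using l v(1) by (intro eq_vecI) auto
    with v(2) show False ..
  qed
  moreover have "l * w k = (\<Sum>j\<in>L. complex_of_real (q k) * cinner (g j) (f k) * w j)" if "k \<in> L" for k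
  proof -
    have "l * w k = complex_of_real (q k) * (l * cinner v (f k))"
      by (simp add: w_def)
    also have "l * cinner v (f k) = (\<Sum>j\<in>L. w j * cinner (g j) (f k))"
      using arg_cong[OF lv, of "\<lambda>u. cinner u (f k)"] cinner_vec_lincomb[OF fin gL]
      by (simp add: cinner_smult_left)
    finally show ?thesis by (simp add: sum_distrib_left algebra_simps)
  qed
  ultimately show ?thesis by blast
qed

lemma weighted_frame_op_eigenvalueI:
  assumes f: "\<forall>i<N. f i \<in> carrier_vec n" and g: "\<forall>i<N. g i \<in> carrier_vec n"
    and L: "L \<subseteq> {..<N}" and l: "l \<noteq> 0"
    and k: "k \<in> L" "w k \<noteq> 0"
    and w: "\<forall>k\<in>L. l * w k = (\<Sum>j\<in>L. complex_of_real (q k) * cinner (g j) (f k) * w j)"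
  shows "eigenvalue (weighted_frame_op n N f g q L) l"
proof -
  let ?x = "vec_lincomb n g L w"
  have fin: "finite L" and gL: "\<forall>j\<in>L. g j \<in> carrier_vec n"
    using L g finite_subset by auto
  have coeff: "complex_of_real (q i) * cinner ?x (f i) = l * w i" if "i \<in> L" for i
    using w that by (simp add: cinner_vec_lincomb[OF fin gL] sum_distrib_left algebra_simps)
  have "weighted_frame_op n N f g q L *\<^sub>v ?x = vec_lincomb n g L (\<lambda>i. l * w i)"
    unfolding weighted_frame_op_mult_vec[OF f L vec_lincomb_carrier] using coeff
    by (simp add: vec_lincomb_def cong: sum.cong)
  also have "\<dots> = l \<cdot>\<^sub>v ?x" by (rule smult_vec_lincomb[symmetric])
  finally have "weighted_frame_op n N f g q L *\<^sub>v ?x = l \<cdot>\<^sub>v ?x" .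
  moreover have "?x \<noteq> 0\<^sub>v n"
  proof
    assume "?x = 0\<^sub>v n"
    hence "l * w k = 0" using coeff[OF k(1)] by (simp add: cinner_def)
    with l k(2) show False by simp
  qed
  moreover have "dim_row (weighted_frame_op n N f g q L) = n" using weighted_frame_op_carrier by blast
  ultimately show ?thesis
    unfolding eigenvalue_def eigenvector_def using vec_lincomb_carrier by metis
qed

lemma weighted_frame_op_eigenvalue_iff:
  assumes f: "\<forall>i<N. f i \<in> carrier_vec n" and g: "\<forall>i<N. g i \<in> carrier_vec n"
    and L: "L \<subseteq> {..<N}" and l: "l \<noteq> 0"
  shows "eigenvalue (weighted_frame_op n N f g q L) l \<longleftrightarrow>
    (\<exists>w. (\<exists>k\<in>L. w k \<noteq> 0) \<and>
         (\<forall>k\<in>L. l * w k = (\<Sum>j\<in>L. complex_of_real (q k) * cinner (g j) (f k) * w j)))"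
  using weighted_frame_op_eigenvalueD[OF f g L l] weighted_frame_op_eigenvalueI[OF f g L l] by blast

lemma spectral_radius_eqI:
  assumes A: "A \<in> carrier_mat n n" and n: "n > 0" and \<mu>: "\<mu> = 0 \<or> eigenvalue A \<mu>"
    and bound: "\<And>l. eigenvalue A l \<Longrightarrow> l \<noteq> 0 \<Longrightarrow> cmod l \<le> cmod \<mu>"
  shows "spectral_radius A = cmod \<mu>"
proof (rule antisym)
  obtain l where l: "eigenvalue A l" "spectral_radius A = cmod l"
    using spectral_radius_mem_max(1)[OF A n] unfolding spectrum_def by blast
  show "spectral_radius A \<le> cmod \<mu>"
    using bound[OF l(1)] l(2) by (cases "l = 0") auto
  show "cmod \<mu> \<le> spectral_radius A"
    using \<mu> spectral_radius_mem_max(2)[OF A n, of "cmod \<mu>"] l(2) unfolding spectrum_def by auto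
qed

lemma spectral_radius_weighted_frame_op_singleton:
  assumes f: "\<forall>i<N. f i \<in> carrier_vec n" and g: "\<forall>i<N. g i \<in> carrier_vec n"
    and i: "i < N" and n: "n > 0"
  shows "spectral_radius (weighted_frame_op n N f g q {i}) = cmod (complex_of_real (q i) * cinner (g i) (f i))"
proof -
  let ?\<kappa> = "complex_of_real (q i) * cinner (g i) (f i)"
  have eigen: "eigenvalue (weighted_frame_op n N f g q {i}) l \<longleftrightarrow> l = ?\<kappa>" if "l \<noteq> 0" for l
  proof -
    have "(\<exists>w. w i \<noteq> 0 \<and> l * w i = ?\<kappa> * w i) \<longleftrightarrow> l = ?\<kappa>"
    proof
      assume "\<exists>w. w i \<noteq> 0 \<and> l * w i = ?\<kappa> * w i"
      then obtain w where "w i \<noteq> 0" "l * w i = ?\<kappa> * w i" by blast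
      thus "l = ?\<kappa>" by simp
    qed (intro exI[of _ "\<lambda>_. 1"], simp)
    thus ?thesis using weighted_frame_op_eigenvalue_iff[OF f g _ that, where L = "{i}" and q = q] i by simp
  qed
  show ?thesis
  proof (rule spectral_radius_eqI[OF weighted_frame_op_carrier n])
    show "?\<kappa> = 0 \<or> eigenvalue (weighted_frame_op n N f g q {i}) ?\<kappa>"
      using eigen by blast
  qed (use eigen in simp)
qed

lemma two_by_two_eigenvalue_iff:
  fixes a b u v l :: "'a::field"
  assumes u: "u \<noteq> 0" and v: "v \<noteq> 0"
  shows "(\<exists>x y. (x \<noteq> 0 \<or> y \<noteq> 0) \<and> l * x = a * x + u * y \<and> l * y = v * x + b * y)
     \<longleftrightarrow> (l - a) * (l - b) = u * v"
proof
  assume "\<exists>x y. (x \<noteq> 0 \<or> y \<noteq> 0) \<and> l * x = a * x + u * y \<and> l * y = v * x + b * y"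
  then obtain x y where xy: "x \<noteq> 0 \<or> y \<noteq> 0"
    and "l * x = a * x + u * y" and "l * y = v * x + b * y" by blast
  hence ex: "(l - a) * x = u * y" and ey: "(l - b) * y = v * x"
    by (simp_all add: left_diff_distrib)
  have "x \<noteq> 0" and "y \<noteq> 0" using xy ex ey u v by auto
  moreover have "(l - a) * (l - b) * (x * y) = u * v * (x * y)"
  proof -
    have "(l - a) * (l - b) * (x * y) = ((l - a) * x) * ((l - b) * y)" by (simp only: mult_ac)
    also have "\<dots> = u * v * (x * y)" unfolding ex ey by (simp only: mult_ac)
    finally show ?thesis .
  qed
  ultimately show "(l - a) * (l - b) = u * v" by simp
next
  assume char: "(l - a) * (l - b) = u * v"
  have "l * u = a * u + u * (l - a)" by (simp add: algebra_simps)
  moreover have "l * (l - a) = v * u + b * (l - a)"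
    using char by (simp add: algebra_simps)
  ultimately show "\<exists>x y. (x \<noteq> 0 \<or> y \<noteq> 0) \<and> l * x = a * x + u * y \<and> l * y = v * x + b * y"
    using u by blast
qed

definition dominant_root :: "real \<Rightarrow> real \<Rightarrow> real \<Rightarrow> real" where
  "dominant_root c a b = (a + b + sqrt ((a - b)\<^sup>2 + 4 * c)) / 2"

lemma dominant_root_commute: "dominant_root c a b = dominant_root c b a"
  unfolding dominant_root_def by (simp add: power2_commute add.commute)

lemma dominant_root_solves:
  assumes "c \<ge> 0"
  shows "(dominant_root c a b - a) * (dominant_root c a b - b) = c"
proof -
  have "(sqrt ((a - b)\<^sup>2 + 4 * c))\<^sup>2 = (a - b)\<^sup>2 + 4 * c"
    using assms by simp
  thus ?thesis unfolding dominant_root_def by (simp add: field_simps power2_eq_square)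
qed

lemma dominant_root_same:
  assumes "c \<ge> 0"
  shows "dominant_root c a a = a + sqrt c"
  using assms by (simp add: dominant_root_def real_sqrt_mult)

lemma dominant_root_mono_left:
  assumes c: "c \<ge> 0" and "a \<le> a'"
  shows "dominant_root c a b \<le> dominant_root c a' b"
proof -
  define s' where "s' = sqrt ((a' - b)\<^sup>2 + 4 * c)"
  have "s'\<^sup>2 = (a' - b)\<^sup>2 + 4 * c" unfolding s'_def using c by simp
  hence "(s' + (a' - a))\<^sup>2 - ((a - b)\<^sup>2 + 4 * c) = 2 * (a' - a) * (s' + (a' - b))"
    by (simp add: power2_eq_square algebra_simps)
  moreover have "\<bar>a' - b\<bar> \<le> s'" unfolding s'_def using c by (simp add: real_le_rsqrt)
  moreover have "0 \<le> 2 * (a' - a) * (s' + (a' - b))"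
    using \<open>a \<le> a'\<close> \<open>\<bar>a' - b\<bar> \<le> s'\<close> by simp
  ultimately have "(a - b)\<^sup>2 + 4 * c \<le> (s' + (a' - a))\<^sup>2"
    by linarith
  hence "sqrt ((a - b)\<^sup>2 + 4 * c) \<le> s' + (a' - a)"
    using \<open>a \<le> a'\<close> \<open>\<bar>a' - b\<bar> \<le> s'\<close> by (intro real_le_lsqrt) auto
  thus ?thesis unfolding dominant_root_def s'_def by simp
qed

lemma dominant_root_mono:
  assumes "c \<ge> 0" and "a \<le> a'" and "b \<le> b'"
  shows "dominant_root c a b \<le> dominant_root c a' b'"
  using dominant_root_mono_left[OF assms(1,2), of b] dominant_root_mono_left[OF assms(1,3), of a']
  by (simp add: dominant_root_commute)

lemma cmod_le_dominant_root:
  fixes l :: complex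
  assumes c: "c \<ge> 0" and ab: "a + b \<ge> 0"
    and root: "(l - complex_of_real a) * (l - complex_of_real b) = complex_of_real c"
  shows "cmod l \<le> dominant_root c a b"
proof -
  define \<rho> where "\<rho> = dominant_root c a b"
  have "\<rho> * (a + b - \<rho>) = a * b - c"
    using dominant_root_solves[OF c, of a b] unfolding \<rho>_def by (simp add: algebra_simps)
  hence "complex_of_real \<rho> * (complex_of_real a + complex_of_real b - complex_of_real \<rho>)
      = complex_of_real a * complex_of_real b - complex_of_real c"
    by (metis of_real_add of_real_diff of_real_mult)
  hence "(l - complex_of_real \<rho>) * (l - complex_of_real (a + b - \<rho>))
      = (l - complex_of_real a) * (l - complex_of_real b) - complex_of_real c"
    by (simp add: algebra_simps)
  hence "l = complex_of_real \<rho> \<or> l = complex_of_real (a + b - \<rho>)"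
    using root by simp
  hence "cmod l = \<bar>\<rho>\<bar> \<or> cmod l = \<bar>a + b - \<rho>\<bar>"
    by (metis norm_of_real)
  moreover have "a + b \<le> 2 * \<rho>" unfolding \<rho>_def dominant_root_def using c by simp
  ultimately show ?thesis using ab unfolding \<rho>_def[symmetric] by (auto simp: abs_le_iff)
qed

lemma weighted_frame_op_pair_eigenvalue_iff:
  assumes f: "\<forall>i<N. f i \<in> carrier_vec n" and g: "\<forall>i<N. g i \<in> carrier_vec n"
    and i: "i < N" and j: "j < N" and ij: "i \<noteq> j" and l: "l \<noteq> 0"
    and u: "complex_of_real (q i) * cinner (g j) (f i) \<noteq> 0"
    and v: "complex_of_real (q j) * cinner (g i) (f j) \<noteq> 0"
  shows "eigenvalue (weighted_frame_op n N f g q {i, j}) l \<longleftrightarrow>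
    (l - complex_of_real (q i) * cinner (g i) (f i)) * (l - complex_of_real (q j) * cinner (g j) (f j)) =
    complex_of_real (q i) * cinner (g j) (f i) * (complex_of_real (q j) * cinner (g i) (f j))"
proof -
  let ?P = "\<lambda>x y. (x \<noteq> 0 \<or> y \<noteq> 0) \<and>
    l * x = complex_of_real (q i) * cinner (g i) (f i) * x + complex_of_real (q i) * cinner (g j) (f i) * y \<and>
    l * y = complex_of_real (q j) * cinner (g i) (f j) * x + complex_of_real (q j) * cinner (g j) (f j) * y"
  have "eigenvalue (weighted_frame_op n N f g q {i, j}) l \<longleftrightarrow> (\<exists>w. ?P (w i) (w j))"
    using weighted_frame_op_eigenvalue_iff[OF f g _ l, where L = "{i, j}" and q = q] i j ij by simp
  also have "\<dots> \<longleftrightarrow> (\<exists>x y. ?P x y)"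
  proof
    assume "\<exists>x y. ?P x y"
    then obtain x y where "?P x y" by blast
    thus "\<exists>w. ?P (w i) (w j)" using ij by (intro exI[of _ "\<lambda>k. if k = i then x else y"]) simp
  qed blast
  also have "\<dots> \<longleftrightarrow> (l - complex_of_real (q i) * cinner (g i) (f i)) * (l - complex_of_real (q j) * cinner (g j) (f j)) =
    complex_of_real (q i) * cinner (g j) (f i) * (complex_of_real (q j) * cinner (g i) (f j))"
    by (rule two_by_two_eigenvalue_iff[OF u v])
  finally show ?thesis .
qed

lemma spectral_radius_weighted_frame_op_pair:
  assumes f: "\<forall>i<N. f i \<in> carrier_vec n" and g: "\<forall>i<N. g i \<in> carrier_vec n"
    and i: "i < N" and j: "j < N" and ij: "i \<noteq> j" and n: "n > 0"
    and a: "complex_of_real (q i) * cinner (g i) (f i) = complex_of_real a"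
    and b: "complex_of_real (q j) * cinner (g j) (f j) = complex_of_real b"
    and ab: "a + b \<ge> 0" and c: "c > 0"
    and off: "complex_of_real (q i * q j) * cinner (g j) (f i) * cinner (g i) (f j) = complex_of_real c"
  shows "spectral_radius (weighted_frame_op n N f g q {i, j}) = dominant_root c a b"
proof -
  let ?T = "weighted_frame_op n N f g q {i, j}"
  have uv: "complex_of_real (q i) * cinner (g j) (f i) * (complex_of_real (q j) * cinner (g i) (f j))
      = complex_of_real c"
    using off by (simp add: algebra_simps)
  hence "complex_of_real (q i) * cinner (g j) (f i) \<noteq> 0" "complex_of_real (q j) * cinner (g i) (f j) \<noteq> 0"
    using c by auto
  note eigen = weighted_frame_op_pair_eigenvalue_iff[OF f g i j ij _ this, unfolded a b uv]
  define \<rho> where "\<rho> = dominant_root c a b"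
  have "0 < sqrt ((a - b)\<^sup>2 + 4 * c)" using c by (simp add: add_nonneg_pos)
  hence "0 < a + b + sqrt ((a - b)\<^sup>2 + 4 * c)" using ab by linarith
  hence \<rho>_pos: "\<rho> > 0" unfolding \<rho>_def dominant_root_def by simp
  have "complex_of_real ((\<rho> - a) * (\<rho> - b)) = complex_of_real c"
    unfolding \<rho>_def using dominant_root_solves c by simp
  hence "eigenvalue ?T (complex_of_real \<rho>)" using eigen[of "complex_of_real \<rho>"] \<rho>_pos by simp
  moreover have "cmod l \<le> \<rho>" if "eigenvalue ?T l" "l \<noteq> 0" for l
    unfolding \<rho>_def using cmod_le_dominant_root[of c a b l] c ab eigen that by simp
  ultimately have "spectral_radius ?T = cmod (complex_of_real \<rho>)"
    using \<rho>_pos by (intro spectral_radius_eqI[OF weighted_frame_op_carrier n]) auto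
  thus ?thesis using \<rho>_pos unfolding \<rho>_def by simp
qed

lemma Rmp_1_eq:
  assumes f: "\<forall>i<N. f i \<in> carrier_vec n" and g: "\<forall>i<N. g i \<in> carrier_vec n"
    and n: "n > 0"
  shows "Rmp n N q 1 f g = Max ((\<lambda>i. cmod (complex_of_real (q i) * cinner (g i) (f i))) ` {..<N})"
proof -
  have singletons: "{L. L \<subseteq> {..<N} \<and> card L = 1} = (\<lambda>i. {i}) ` {..<N}"
    by (auto simp: card_1_singleton_iff)
  have "(\<lambda>L. spectral_radius (weighted_frame_op n N f g q L)) ` {L. L \<subseteq> {..<N} \<and> card L = 1}
      = (\<lambda>i. cmod (complex_of_real (q i) * cinner (g i) (f i))) ` {..<N}"
    unfolding singletons image_image
    using spectral_radius_weighted_frame_op_singleton[OF f g _ n] by (intro image_cong) auto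
  thus ?thesis unfolding Rmp_eq_Max_weighted_frame_op by simp
qed

lemma Max_distinct_pairs_eq:
  fixes h :: "'b::linorder \<Rightarrow> 'b \<Rightarrow> 'c::linorder" and \<alpha> :: "'a \<Rightarrow> 'b"
  assumes fin: "finite I"
    and comm: "\<And>x y. h x y = h y x"
    and mono: "\<And>x x' y y'. x \<le> x' \<Longrightarrow> y \<le> y' \<Longrightarrow> h x y \<le> h x' y'"
    and k: "k \<in> I" "\<And>i. i \<in> I \<Longrightarrow> \<alpha> i \<le> \<alpha> k"
    and m: "m \<in> I" "m \<noteq> k" "\<And>i. i \<in> I \<Longrightarrow> i \<noteq> k \<Longrightarrow> \<alpha> i \<le> \<alpha> m"
  shows "Max ((\<lambda>(i, j). h (\<alpha> i) (\<alpha> j)) ` {(i, j). i \<in> I \<and> j \<in> I \<and> i \<noteq> j}) = h (\<alpha> k) (\<alpha> m)"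
proof (rule Max_eqI)
  show "finite ((\<lambda>(i, j). h (\<alpha> i) (\<alpha> j)) ` {(i, j). i \<in> I \<and> j \<in> I \<and> i \<noteq> j})"
    by (rule finite_imageI[OF finite_subset[of _ "I \<times> I"]]) (use fin in auto)
  show "h (\<alpha> k) (\<alpha> m) \<in> (\<lambda>(i, j). h (\<alpha> i) (\<alpha> j)) ` {(i, j). i \<in> I \<and> j \<in> I \<and> i \<noteq> j}"
    using k(1) m(1,2) by (intro image_eqI[of _ _ "(k, m)"]) auto
next
  fix y assume "y \<in> (\<lambda>(i, j). h (\<alpha> i) (\<alpha> j)) ` {(i, j). i \<in> I \<and> j \<in> I \<and> i \<noteq> j}"
  then obtain i j where ij: "i \<in> I" "j \<in> I" "i \<noteq> j" and y: "y = h (\<alpha> i) (\<alpha> j)" by auto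
  show "y \<le> h (\<alpha> k) (\<alpha> m)"
  proof (cases "j = k")
    case True
    hence "y = h (\<alpha> j) (\<alpha> i)" using y comm by simp
    also have "\<dots> \<le> h (\<alpha> k) (\<alpha> m)" using True ij k m by (intro mono) auto
    finally show ?thesis .
  next
    case False
    thus ?thesis unfolding y using ij k m by (intro mono) auto
  qed
qed

lemma Rmp_2_eq:
  assumes f: "\<forall>i<N. f i \<in> carrier_vec n" and g: "\<forall>i<N. g i \<in> carrier_vec n"
    and n: "n > 0" and c: "c > 0"
    and \<alpha>: "\<forall>i<N. complex_of_real (q i) * cinner (g i) (f i) = complex_of_real (\<alpha> i)"
    and \<alpha>_nonneg: "\<forall>i<N. \<alpha> i \<ge> 0"
    and off: "\<forall>i<N. \<forall>j<N. i \<noteq> j \<longrightarrow>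
      complex_of_real (q i * q j) * cinner (g j) (f i) * cinner (g i) (f j) = complex_of_real c"
  shows "Rmp n N q 2 f g =
    Max ((\<lambda>(i, j). dominant_root c (\<alpha> i) (\<alpha> j)) ` {(i, j). i < N \<and> j < N \<and> i \<noteq> j})"
proof -
  have pair: "spectral_radius (weighted_frame_op n N f g q {i, j}) = dominant_root c (\<alpha> i) (\<alpha> j)"
    if "i < N" "j < N" "i \<noteq> j" for i j
    using spectral_radius_weighted_frame_op_pair[OF f g that n _ _ _ c] \<alpha> \<alpha>_nonneg off that by simp
  have pairs: "{L. L \<subseteq> {..<N} \<and> card L = 2} = (\<lambda>(i, j). {i, j}) ` {(i, j). i < N \<and> j < N \<and> i \<noteq> j}"
    by (auto simp: card_2_iff)
  have "(\<lambda>L. spectral_radius (weighted_frame_op n N f g q L)) ` {L. L \<subseteq> {..<N} \<and> card L = 2}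
      = (\<lambda>(i, j). dominant_root c (\<alpha> i) (\<alpha> j)) ` {(i, j). i < N \<and> j < N \<and> i \<noteq> j}"
    unfolding pairs image_image using pair by (intro image_cong) auto
  thus ?thesis unfolding Rmp_eq_Max_weighted_frame_op by simp
qed

lemma Rmp_2_eq_dominant_root:
  assumes f: "\<forall>i<N. f i \<in> carrier_vec n" and g: "\<forall>i<N. g i \<in> carrier_vec n"
    and n: "n > 0" and c: "c > 0" and N: "N \<ge> 2"
    and \<alpha>: "\<forall>i<N. complex_of_real (q i) * cinner (g i) (f i) = complex_of_real (\<alpha> i)"
    and \<alpha>_nonneg: "\<forall>i<N. \<alpha> i \<ge> 0"
    and off: "\<forall>i<N. \<forall>j<N. i \<noteq> j \<longrightarrow>
      complex_of_real (q i * q j) * cinner (g j) (f i) * cinner (g i) (f j) = complex_of_real c"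
    and k: "k < N" "\<alpha> k = Max (\<alpha> ` {..<N})"
  shows "Rmp n N q 2 f g = dominant_root c (\<alpha> k) (Max (\<alpha> ` ({..<N} - {k})))"
proof -
  have "(if k = 0 then 1 else 0) \<in> {..<N} - {k}" using N by auto
  hence "Max (\<alpha> ` ({..<N} - {k})) \<in> \<alpha> ` ({..<N} - {k})"
    by (intro Max_in) auto
  then obtain m where m_max: "Max (\<alpha> ` ({..<N} - {k})) = \<alpha> m" and "m \<in> {..<N} - {k}"
    by (rule imageE)
  hence m: "m < N" "m \<noteq> k" "\<alpha> m = Max (\<alpha> ` ({..<N} - {k}))" by auto
  have "Max ((\<lambda>(i, j). dominant_root c (\<alpha> i) (\<alpha> j)) ` {(i, j). i \<in> {..<N} \<and> j \<in> {..<N} \<and> i \<noteq> j})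
      = dominant_root c (\<alpha> k) (\<alpha> m)"
  proof (rule Max_distinct_pairs_eq)
    show "dominant_root c x y = dominant_root c y x" for x y by (rule dominant_root_commute)
    show "dominant_root c x y \<le> dominant_root c x' y'" if "x \<le> x'" "y \<le> y'" for x x' y y'
      using c that by (intro dominant_root_mono) simp_all
    show "\<alpha> i \<le> \<alpha> k" if "i \<in> {..<N}" for i unfolding k(2) using that by simp
    show "\<alpha> i \<le> \<alpha> m" if "i \<in> {..<N}" "i \<noteq> k" for i unfolding m(3) using that by simp
  qed (use k(1) m(1,2) in simp_all)
  thus ?thesis unfolding Rmp_2_eq[OF f g n c \<alpha> \<alpha>_nonneg off] m(3)[symmetric] by simp
qed

lemma Max_image_remove_eq:
  fixes \<alpha> :: "'a \<Rightarrow> 'b::linorder"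
  assumes "finite I" and "k' \<in> I" and "k' \<noteq> k" and "\<alpha> k' = Max (\<alpha> ` I)"
  shows "Max (\<alpha> ` (I - {k})) = Max (\<alpha> ` I)"
proof (rule antisym)
  show "Max (\<alpha> ` (I - {k})) \<le> Max (\<alpha> ` I)" using assms by (intro Max_mono) auto
  have "\<alpha> k' \<in> \<alpha> ` (I - {k})" using assms(2,3) by blast
  thus "Max (\<alpha> ` I) \<le> Max (\<alpha> ` (I - {k}))" unfolding assms(4)[symmetric] using assms(1) by simp
qed

lemma weight_numbers_pos:
  assumes q: "weight_numbers n N q" and N: "N \<ge> 2" and i: "i < N"
  shows "q i > 0"
proof -
  obtain p where p: "prob_seq N p"
    and pq: "(\<Sum>j<N. p j) - p i \<noteq> 0" "q i = (\<Sum>j<N. p j) / ((\<Sum>j<N. p j) - p i) * (real N - 1) / real n"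
    using q i unfolding weight_numbers_def by blast
  have "(\<Sum>j<N. p j) = 1" and "p i \<le> 1" using p i unfolding prob_seq_def by auto
  moreover have "n > 0" using q unfolding weight_numbers_def by simp
  ultimately show ?thesis using pq N by simp
qed

theorem theorem3p2:
  fixes n N :: nat and f g :: "nat \<Rightarrow> complex vec" and q :: "nat \<Rightarrow> real" and c :: real
    and \<zeta> :: "nat set"
  assumes hN: "N \<ge> max n 2"
    and hF: "is_frame n N f"
    and hq: "weight_numbers n N q"
    and hG: "is_dual n N f g"
    and h1: "\<forall>i<N. Im (cinner (g i) (f i)) = 0 \<and> Re (cinner (g i) (f i)) \<ge> 0"
    and hc: "c > 0"
    and h2: "\<forall>i<N. \<forall>j<N. i \<noteq> j \<longrightarrow>
               complex_of_real (q i * q j) * cinner (g j) (f i) * cinner (g i) (f j) = complex_of_real c"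
    and h\<zeta>: "\<zeta> = {i. i < N \<and> complex_of_real (q i) * cinner (g i) (f i) = complex_of_real (Rmp n N q 1 f g)}"
  shows "(card \<zeta> = 1 \<longrightarrow>
            Rmp n N q 2 f g =
              (let R1 = Rmp n N q 1 f g;
                   M = Max {q i * Re (cinner (g i) (f i)) | i. i < N \<and> i \<notin> \<zeta>}
               in (R1 + M + sqrt ((R1 - M)\<^sup>2 + 4 * c)) / 2))
       \<and> (card \<zeta> > 1 \<longrightarrow> Rmp n N q 2 f g = Rmp n N q 1 f g + sqrt c)"
proof -
  \<comment> \<open>Frame and duality are needed only to know that all f i and g i lie in C^n.\<close>
  have f: "\<forall>i<N. f i \<in> carrier_vec n" and g: "\<forall>i<N. g i \<in> carrier_vec n"
    using hF hG unfolding is_dual_def is_frame_def by blast+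
  have n: "n > 0" and N: "N \<ge> 2" using hq hN unfolding weight_numbers_def by simp_all
  define \<alpha> where "\<alpha> i = q i * Re (cinner (g i) (f i))" for i
  have \<alpha>: "\<forall>i<N. complex_of_real (q i) * cinner (g i) (f i) = complex_of_real (\<alpha> i)"
    using h1 unfolding \<alpha>_def by (simp add: complex_eq_iff)
  have \<alpha>_nonneg: "\<forall>i<N. \<alpha> i \<ge> 0"
    using h1 weight_numbers_pos[OF hq N] unfolding \<alpha>_def by (simp add: less_imp_le)
  define R1 where "R1 = Rmp n N q 1 f g"
  have R1: "R1 = Max (\<alpha> ` {..<N})"
    unfolding R1_def Rmp_1_eq[OF f g n] using \<alpha> \<alpha>_nonneg by (intro arg_cong[where f = Max] image_cong) auto
  have \<zeta>: "\<zeta> = {i. i < N \<and> \<alpha> i = R1}" unfolding h\<zeta> R1_def[symmetric] using \<alpha> by auto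
  have "R1 \<in> \<alpha> ` {..<N}" unfolding R1 using N by (intro Max_in) (auto simp: lessThan_empty_iff)
  then obtain k where k: "k \<in> \<zeta>" unfolding \<zeta> by auto
  define M where "M = Max (\<alpha> ` ({..<N} - {k}))"
  have R2: "Rmp n N q 2 f g = dominant_root c R1 M"
    using Rmp_2_eq_dominant_root[OF f g n hc N \<alpha> \<alpha>_nonneg h2] k unfolding \<zeta> R1 M_def by simp
  show ?thesis
  proof (intro conjI impI)
    assume "card \<zeta> = 1"
    hence "\<zeta> = {k}" using k by (metis card_1_singletonE singletonD)
    hence "{q i * Re (cinner (g i) (f i)) | i. i < N \<and> i \<notin> \<zeta>} = \<alpha> ` ({..<N} - {k})"
      unfolding \<alpha>_def by auto
    thus "Rmp n N q 2 f g = (let R1 = Rmp n N q 1 f g;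
                   M = Max {q i * Re (cinner (g i) (f i)) | i. i < N \<and> i \<notin> \<zeta>}
               in (R1 + M + sqrt ((R1 - M)\<^sup>2 + 4 * c)) / 2)"
      unfolding R2 Let_def R1_def[symmetric] M_def dominant_root_def by simp
  next
    assume "card \<zeta> > 1"
    then obtain k' where "k' \<in> \<zeta>" "k' \<noteq> k" using card_mono[of "{k}" \<zeta>] by fastforce
    hence "M = R1" unfolding M_def R1 using k by (intro Max_image_remove_eq) (auto simp: \<zeta> R1)
    thus "Rmp n N q 2 f g = Rmp n N q 1 f g + sqrt c"
      unfolding R2 R1_def using dominant_root_same hc by simp
  qed
qed

end
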